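(* There are no rational numbers (in particular, no integers) $x_1,x_2,x_3,d_1,d_2,d_3,L$ with $x_1,x_2,x_3,d_1,d_2,d_3>0$ such that $\operatorname{rank}N\le 2$, $\operatorname{rank}N_1=2$, $\operatorname{rank}N_2=2$, and $\tilde p_1=\tilde p_2=\dots=\tilde p_8=0$. Likewise there are no such positive rational numbers with $\operatorname{rank}N\le 2$, $\operatorname{rank}N_1=\operatorname{rank}N_2=2$ satisfying $p_0=p_1=p_2=p_3=0$.
   Context: Define $p_0=x_1^2+x_2^2+x_3^2-L^2$, $p_1=x_2^2+x_3^2-d_1^2$, $p_2=x_3^2+x_1^2-d_2^2$, $p_3=x_1^2+x_2^2-d_3^2$, and $\tilde p_1=p_0$, $\tilde p_2=p_1+p_2+p_3$, $\tilde p_3=d_1p_1+d_2p_2+d_3p_3$, $\tilde p_4=x_1p_1+x_2p_2+x_3p_3$, $\tilde p_5=x_1d_1p_1+x_2d_2p_2+x_3d_3p_3$, $\tilde p_6=x_1^2p_1+x_2^2p_2+x_3^2p_3$, $\tilde p_7=d_1^2p_1+d_2^2p_2+d_3^2p_3$, $\tilde p_8=x_1^2d_1^2p_1+x_2^2d_2^2p_2+x_3^2d_3^2p_3$. $N$ is the $3\times 7$ matrix whose $i$-th row is $(1,\ d_i,\ x_i,\ x_id_i,\ x_i^2,\ d_i^2,\ x_i^2d_i^2)$; $N_1$ is the $3\times 2$ matrix with rows $(1,d_i)$; $N_2$ is the $3\times 2$ matrix with rows $(1,x_i)$, $i=1,2,3$. Ranks are over $\mathbb{Q}$. *)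

theory Defs
  imports "HOL-Analysis.Analysis"
begin

definition N_row :: "rat \<Rightarrow> rat \<Rightarrow> rat^7" where
  "N_row x d = vector [1, d, x, x*d, x^2, d^2, x^2*d^2]"

definition N_mat :: "rat \<Rightarrow> rat \<Rightarrow> rat \<Rightarrow> rat \<Rightarrow> rat \<Rightarrow> rat \<Rightarrow> rat^7^3" where
  "N_mat x1 x2 x3 d1 d2 d3 = vector [N_row x1 d1, N_row x2 d2, N_row x3 d3]"

definition N1_mat :: "rat \<Rightarrow> rat \<Rightarrow> rat \<Rightarrow> rat^2^3" where
  "N1_mat d1 d2 d3 = vector [vector [1, d1], vector [1, d2], vector [1, d3]]"

definition N2_mat :: "rat \<Rightarrow> rat \<Rightarrow> rat \<Rightarrow> rat^2^3" where
  "N2_mat x1 x2 x3 = vector [vector [1, x1], vector [1, x2], vector [1, x3]]"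

end

theory Submission
  imports Defs
begin

(* A matrix with three rows and rank at most 2 has a
   nontrivial linear relation a1 r1 + a2 r2 + a3 r3 = 0 among its rows.  For N the
   columns 1, x, x^2 say that the weights a_i annihilate 1, x and x^2; if all a_i were
   nonzero this Vandermonde system would force x1 = x2 = x3, contradicting rank N2 = 2.
   So some a_k vanishes and two rows of N coincide: x_i = x_j and d_i = d_j, while
   rank N1 = 2 forces the third d_k to differ.  For such a coincident pair p_i = p_j,
   and the equations p~2 = p~3 = 0 become a 2x2 linear system in (p_i, p_k) with
   determinant d_k - d_i <> 0; hence p_k = 2 x_i^2 - d_k^2 = 0, which would make
   d_k / x_i a rational square root of 2.  The second claim is a special case, since
   p1 = p2 = p3 = 0 makes every p~ vanish. *)

(* A matrix whose rank is smaller than its number of rows has linearly dependent rows,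
   as a family (repeated rows count as dependent). *)
lemma rank_less_card_rows_dependent:
  fixes A :: "'a::field^'n^'m"
  assumes "rank A < CARD('m)"
  shows "\<exists>c. (\<Sum>i\<in>UNIV. c i *s row i A) = 0 \<and> (\<exists>i. c i \<noteq> 0)"
proof (rule ccontr)
  assume "\<not> ?thesis"
  then have indep: "\<And>c. (\<Sum>i\<in>UNIV. c i *s row i A) = 0 \<Longrightarrow> c = (\<lambda>_. 0)"
    by auto
  have select: "(\<Sum>k\<in>UNIV. (if k = i then 1 else 0) *s row k A) = row i A" for i
  proof -
    have "(if k = i then 1 else 0) *s row k A = (if k = i then row k A else 0)" for k
      by simp
    then show ?thesis by (simp add: sum.delta')
  qed
  have inj: "inj (\<lambda>i. row i A)"
  proof (rule injI)
    fix i j assume eq: "row i A = row j A"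
    let ?c = "\<lambda>k. (if k = i then 1 else 0::'a) - (if k = j then 1 else 0)"
    have "(\<Sum>k\<in>UNIV. ?c k *s row k A) = 0"
      using select[of i] select[of j] eq
      by (simp add: sum_subtractf vector_sub_rdistrib)
    then have "?c = (\<lambda>_. 0)" by (rule indep)
    then have "?c i = 0" by (rule fun_cong)
    then show "i = j" by (auto split: if_splits)
  qed
  have rows: "rows A = range (\<lambda>i. row i A)"
    by (auto simp: rows_def)
  have "\<not> vec.dependent (rows A)"
  proof
    assume "vec.dependent (rows A)"
    then obtain u where u: "\<exists>v\<in>rows A. u v \<noteq> 0" "(\<Sum>v\<in>rows A. u v *s v) = 0"
      by (auto simp: vec.dependent_finite rows)
    have "(\<Sum>i\<in>UNIV. u (row i A) *s row i A) = 0"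
      using u(2) by (simp add: rows sum.reindex[OF inj])
    then have "(\<lambda>i. u (row i A)) = (\<lambda>_. 0)" by (rule indep)
    with u(1) show False by (auto simp: rows dest: fun_cong)
  qed
  then have "rank A = card (rows A)"
    by (simp add: row_rank_def_gen vec.dim_eq_card_independent)
  also have "\<dots> = CARD('m)"
    by (simp add: rows card_image[OF inj])
  finally show False using assms by simp
qed

lemma rank_le_1_if_rows_equal:
  fixes A :: "'a::field^'n^'m"
  assumes "\<forall>i. row i A = v"
  shows "rank A \<le> 1"
proof -
  have "rows A = {v}"
    using assms by (auto simp: rows_def)
  then show ?thesis
    by (simp add: row_rank_def_gen vec.dim_le_card vec.span_base)
qed

lemma rank_le_2_three_rows_dependent:
  fixes A :: "'a::field^'n^3"
  assumes "rank A \<le> 2"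
  obtains a1 a2 a3 where "a1 \<noteq> 0 \<or> a2 \<noteq> 0 \<or> a3 \<noteq> 0"
    and "\<And>j. a1 * A$1$j + a2 * A$2$j + a3 * A$3$j = 0"
proof -
  obtain c where c: "(\<Sum>i\<in>UNIV. c i *s row i A) = 0" "\<exists>i. c i \<noteq> 0"
    using rank_less_card_rows_dependent[of A] assms by auto
  have "c 1 \<noteq> 0 \<or> c 2 \<noteq> 0 \<or> c 3 \<noteq> 0"
    using c(2) exhaust_3 by metis
  moreover have "c 1 * A$1$j + c 2 * A$2$j + c 3 * A$3$j = 0" for j
    using arg_cong[OF c(1), of "\<lambda>v. v $ j"] by (simp add: sum_3 row_def)
  ultimately show thesis by (rule that)
qed

lemma nonzero_weights_annihilating_quadratics:
  fixes a1 a2 a3 x1 x2 x3 :: "'a::idom"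
  assumes sum0: "a1 + a2 + a3 = 0" and sum1: "a1*x1 + a2*x2 + a3*x3 = 0"
    and sum2: "a1*x1^2 + a2*x2^2 + a3*x3^2 = 0"
    and "a1 \<noteq> 0" "a2 \<noteq> 0" "a3 \<noteq> 0"
  shows "x1 = x2 \<and> x2 = x3"
proof -
  have "a1 * ((x1 - x2) * (x1 - x3)) = 0"
    using sum0 sum1 sum2 by algebra
  moreover have "a2 * ((x2 - x1) * (x2 - x3)) = 0"
    using sum0 sum1 sum2 by algebra
  moreover have "a3 * ((x3 - x1) * (x3 - x2)) = 0"
    using sum0 sum1 sum2 by algebra
  ultimately show ?thesis
    using assms(4-6) by auto
qed

lemma coprime_square_ne_twice_square:
  fixes p q :: int
  assumes "coprime p q"
  shows "p^2 \<noteq> 2 * q^2"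
proof
  assume eq: "p^2 = 2 * q^2"
  then have "even (p^2)" by simp
  then have "even p" by simp
  then obtain k where k: "p = 2 * k" by blast
  with eq have "q^2 = 2 * k^2" by (simp add: power2_eq_square)
  then have "even (q^2)" by simp
  then have "even q" by simp
  with \<open>even p\<close> assms show False
    by (metis coprime_common_divisor dvd_refl odd_one)
qed

lemma rat_square_ne_two: "(r::rat)^2 \<noteq> 2"
proof
  assume r2: "r^2 = 2"
  obtain p q where pq: "quotient_of r = (p, q)" by fastforce
  have r: "r = of_int p / of_int q" and "q > 0" and "coprime p q"
    using quotient_of_div[OF pq] quotient_of_denom_pos[OF pq] quotient_of_coprime[OF pq]
    by auto
  have "(of_int p)^2 = (2::rat) * (of_int q)^2"
    using r2 r \<open>q > 0\<close> by (simp add: field_simps power_divide)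
  then have "p^2 = 2 * q^2"
    by (metis of_int_eq_iff of_int_mult of_int_numeral of_int_power)
  with coprime_square_ne_twice_square[OF \<open>coprime p q\<close>] show False by blast
qed

lemma rat_square_ne_twice_square:
  fixes x d :: rat
  assumes "x \<noteq> 0"
  shows "d^2 \<noteq> 2 * x^2"
  using rat_square_ne_two[of "d / x"] assms by (auto simp: power_divide)

lemma N_mat_entries:
  "N_mat x1 x2 x3 d1 d2 d3 $ 1 = N_row x1 d1"
  "N_mat x1 x2 x3 d1 d2 d3 $ 2 = N_row x2 d2"
  "N_mat x1 x2 x3 d1 d2 d3 $ 3 = N_row x3 d3"
  "N_row x d $ 1 = 1" "N_row x d $ 2 = d" "N_row x d $ 3 = x" "N_row x d $ 5 = x^2"
  unfolding N_mat_def N_row_def vector_def by simp_all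

lemma N1_rank_2_not_constant:
  assumes "rank (N1_mat d1 d2 d3) = 2"
  shows "\<not> (d1 = d2 \<and> d2 = d3)"
proof
  assume "d1 = d2 \<and> d2 = d3"
  then have "rank (N1_mat d1 d2 d3) \<le> 1"
    by (intro rank_le_1_if_rows_equal[of _ "vector [1, d1]"])
      (simp add: N1_mat_def row_def vec_lambda_eta forall_3)
  with assms show False by simp
qed

lemma N2_rank_2_not_constant:
  assumes "rank (N2_mat x1 x2 x3) = 2"
  shows "\<not> (x1 = x2 \<and> x2 = x3)"
proof
  assume "x1 = x2 \<and> x2 = x3"
  then have "rank (N2_mat x1 x2 x3) \<le> 1"
    by (intro rank_le_1_if_rows_equal[of _ "vector [1, x1]"])
      (simp add: N2_mat_def row_def vec_lambda_eta forall_3)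
  with assms show False by simp
qed

lemma rank_conditions_coincident_pair:
  assumes rN: "rank (N_mat x1 x2 x3 d1 d2 d3) \<le> 2"
    and rN1: "rank (N1_mat d1 d2 d3) = 2" and rN2: "rank (N2_mat x1 x2 x3) = 2"
  shows "(x1 = x2 \<and> d1 = d2 \<and> d1 \<noteq> d3) \<or> (x1 = x3 \<and> d1 = d3 \<and> d1 \<noteq> d2)
       \<or> (x2 = x3 \<and> d2 = d3 \<and> d1 \<noteq> d2)"
proof -
  let ?N = "N_mat x1 x2 x3 d1 d2 d3"
  obtain a1 a2 a3 where nontrivial: "a1 \<noteq> 0 \<or> a2 \<noteq> 0 \<or> a3 \<noteq> 0"
    and rel: "\<And>j. a1 * ?N$1$j + a2 * ?N$2$j + a3 * ?N$3$j = 0"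
    using rank_le_2_three_rows_dependent[OF rN] by blast
  have col1: "a1 + a2 + a3 = 0" using rel[of 1] by (simp add: N_mat_entries)
  have cold: "a1*d1 + a2*d2 + a3*d3 = 0" using rel[of 2] by (simp add: N_mat_entries)
  have colx: "a1*x1 + a2*x2 + a3*x3 = 0" using rel[of 3] by (simp add: N_mat_entries)
  have colxx: "a1*x1^2 + a2*x2^2 + a3*x3^2 = 0" using rel[of 5] by (simp add: N_mat_entries)
  have "a1 = 0 \<or> a2 = 0 \<or> a3 = 0"
    using nonzero_weights_annihilating_quadratics[OF col1 colx colxx]
      N2_rank_2_not_constant[OF rN2] by blast
  then have "(x2 = x3 \<and> d2 = d3) \<or> (x1 = x3 \<and> d1 = d3) \<or> (x1 = x2 \<and> d1 = d2)"
  proof (elim disjE)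
    assume "a1 = 0"
    then have "a3 = - a2" "a2 \<noteq> 0" using col1 nontrivial by auto
    then show ?thesis using colx cold \<open>a1 = 0\<close> by (auto simp: algebra_simps)
  next
    assume "a2 = 0"
    then have "a3 = - a1" "a1 \<noteq> 0" using col1 nontrivial by auto
    then show ?thesis using colx cold \<open>a2 = 0\<close> by (auto simp: algebra_simps)
  next
    assume "a3 = 0"
    then have "a2 = - a1" "a1 \<noteq> 0" using col1 nontrivial by auto
    then show ?thesis using colx cold \<open>a3 = 0\<close> by (auto simp: algebra_simps)
  qed
  then show ?thesis
    using N1_rank_2_not_constant[OF rN1] by auto
qed

lemma coincident_pair_contradiction:
  fixes x d e P :: rat
  assumes "x \<noteq> 0" "d \<noteq> e"
    and tilde2: "P + P + (2*x^2 - e^2) = 0"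
    and tilde3: "d*P + d*P + e*(2*x^2 - e^2) = 0"
  shows False
proof -
  have "(e - d) * (2*x^2 - e^2) = 0"
    using tilde2 tilde3 by algebra
  then have "e^2 = 2 * x^2"
    using \<open>d \<noteq> e\<close> by simp
  with rat_square_ne_twice_square[OF \<open>x \<noteq> 0\<close>] show False by blast
qed

lemma rank_conditions_exclude_tilde_2_3:
  fixes x1 x2 x3 d1 d2 d3 :: rat
  defines "p1 \<equiv> x2^2 + x3^2 - d1^2" and "p2 \<equiv> x3^2 + x1^2 - d2^2"
    and "p3 \<equiv> x1^2 + x2^2 - d3^2"
  assumes "x1 \<noteq> 0" "x2 \<noteq> 0"
    and "rank (N_mat x1 x2 x3 d1 d2 d3) \<le> 2"
    and "rank (N1_mat d1 d2 d3) = 2" "rank (N2_mat x1 x2 x3) = 2"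
    and tilde2: "p1 + p2 + p3 = 0" and tilde3: "d1*p1 + d2*p2 + d3*p3 = 0"
  shows False
  using rank_conditions_coincident_pair[OF assms(6-8)]
proof (elim disjE conjE)
  assume "x1 = x2" "d1 = d2" "d1 \<noteq> d3"
  then show False
    using coincident_pair_contradiction[of x1 d1 d3 p1] tilde2 tilde3 \<open>x1 \<noteq> 0\<close>
    by (simp add: p1_def p2_def p3_def algebra_simps)
next
  assume "x1 = x3" "d1 = d3" "d1 \<noteq> d2"
  then show False
    using coincident_pair_contradiction[of x1 d1 d2 p1] tilde2 tilde3 \<open>x1 \<noteq> 0\<close>
    by (simp add: p1_def p2_def p3_def algebra_simps)
next
  assume "x2 = x3" "d2 = d3" "d1 \<noteq> d2"
  then show False
    using coincident_pair_contradiction[of x2 d2 d1 p2] tilde2 tilde3 \<open>x2 \<noteq> 0\<close>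
    by (simp add: p1_def p2_def p3_def algebra_simps)
qed

theorem theorem6p2:
  shows "\<not> (\<exists>x1 x2 x3 d1 d2 d3 L :: rat.
            x1 > 0 \<and> x2 > 0 \<and> x3 > 0 \<and> d1 > 0 \<and> d2 > 0 \<and> d3 > 0 \<and>
            rank (N_mat x1 x2 x3 d1 d2 d3) \<le> 2 \<and>
            rank (N1_mat d1 d2 d3) = 2 \<and> rank (N2_mat x1 x2 x3) = 2 \<and>
            (let p0 = x1^2 + x2^2 + x3^2 - L^2;
                 p1 = x2^2 + x3^2 - d1^2;
                 p2 = x3^2 + x1^2 - d2^2;
                 p3 = x1^2 + x2^2 - d3^2
             in p0 = 0 \<and>
                p1 + p2 + p3 = 0 \<and>
                d1*p1 + d2*p2 + d3*p3 = 0 \<and>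
                x1*p1 + x2*p2 + x3*p3 = 0 \<and>
                x1*d1*p1 + x2*d2*p2 + x3*d3*p3 = 0 \<and>
                x1^2*p1 + x2^2*p2 + x3^2*p3 = 0 \<and>
                d1^2*p1 + d2^2*p2 + d3^2*p3 = 0 \<and>
                x1^2*d1^2*p1 + x2^2*d2^2*p2 + x3^2*d3^2*p3 = 0))
       \<and> \<not> (\<exists>x1 x2 x3 d1 d2 d3 L :: rat.
            x1 > 0 \<and> x2 > 0 \<and> x3 > 0 \<and> d1 > 0 \<and> d2 > 0 \<and> d3 > 0 \<and>
            rank (N_mat x1 x2 x3 d1 d2 d3) \<le> 2 \<and>
            rank (N1_mat d1 d2 d3) = 2 \<and> rank (N2_mat x1 x2 x3) = 2 \<and>
            x1^2 + x2^2 + x3^2 - L^2 = 0 \<and>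
            x2^2 + x3^2 - d1^2 = 0 \<and>
            x3^2 + x1^2 - d2^2 = 0 \<and>
            x1^2 + x2^2 - d3^2 = 0)"
proof ((intro conjI notI; elim exE conjE), goal_cases)
  case (1 x1 x2 x3 d1 d2 d3 L)
  then show False
    using rank_conditions_exclude_tilde_2_3[of x1 x2 x3 d1 d2 d3] by (auto simp: Let_def)
next
  case (2 x1 x2 x3 d1 d2 d3 L)
  then show False
    using rank_conditions_exclude_tilde_2_3[of x1 x2 x3 d1 d2 d3] by auto
qed

end
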